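(* Let $c\in[\frac12,1)$ and let $d,\delta$ be positive integers with $d\ge\delta+3$. Let $G$ be a connected paw-friendly graph with maximum degree $\delta$ and $w:V(G)\to[0,1]$ a weight function with $w(V(G))=1$, and assume $G$ has no $d$-bounded $(w,c)$-balanced separator. Fix a bijection $\mathcal{O}:V(G)\to\{1,\dots,|V(G)|\}$, let $X$ be the set of minimal elements of $\le_A$, and let $\beta$ be the star-free bag of $G$. Then: (i) $\beta=X$ and $G[\beta]$ is bipartite; (ii) if $(X_1,X_2)$ is a bipartition of $G[\beta]$, then for $i=1,2$ the set $\mathcal{S}_i=\{S_x: x\in X_i\}$ is loosely laminar.
   Context: For $X\subseteq V(G)$, $w(X)=\sum_{x\in X}w(x)$; $N[v]$ is the closed neighborhood; $N^d[v]$ the set of vertices at distance at most $d$ from $v$. $X$ is $d$-bounded if $X\subseteq N^d[v]$ for some $v$; $X$ is a $(w,c)$-balanced separator if every component $D$ of $G\setminus X$ has $w(D)\le c$. A paw is the graph with vertices $v_1,\dots,v_4$ and edges $v_1v_2,v_2v_3,v_3v_4,v_2v_4$. For a graph $H$, $x\in V(H)$ breaks $Y\subseteq V(H)\setminus\{x\}$ (in $H$) if for every connected component $D$ of $H\setminus N_H[x]$, $Y\not\subseteq N_H[D]$ ($N_H[D]$ being $D$ plus its neighbors). $G$ is paw-friendly if $G$ is perfect and for every induced subgraph $H$ and every induced paw in $H$ with vertex set $\{c,a,b_1,b_2\}$ and edges $\{ab_1,ab_2,b_1b_2,ac\}$, either $a$ breaks $\{c,b_1,b_2\}$, or $b_1$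 breaks $\{c,b_2\}$, or $b_2$ breaks $\{c,b_1\}$ in $H$. For $v\in V(G)$, the canonical star separation $S_v=(A_v,C_v,B_v)$: $B_v$ is the largest-weight connected component of $G\setminus N[v]$ (unique under these assumptions), $C_v$ consists of $v$ and every neighbor of $v$ with a neighbor in $B_v$, $A_v=V(G)\setminus(B_v\cup C_v)$. $u,v$ are star twins if $B_u=B_v$, $C_u\setminus\{u\}=C_v\setminus\{v\}$, $A_u\setminus\{v\}=A_v\setminus\{u\}$. $x\le_A y$ iff $x=y$, or $x,y$ are star twins and $\mathcal{O}(x)<\mathcal{O}(y)$, or $x,y$ are not star twins and $y\in A_x$ (a partial order). The star-free bag is $\beta=\bigcap_{x\in X}(B_x\cup C_x)$. Separations $S,S'$ (triples $(A,C,B)$) are loosely non-crossing if $A(S)\cap C(S')=\emptyset=A(S')\cap C(S)$; a set of separations is loosely laminar if every two are loosely non-crossing. *)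

theory Defs
  imports Complex_Main
begin

definition graph :: "'a set \<Rightarrow> ('a \<Rightarrow> 'a \<Rightarrow> bool) \<Rightarrow> bool" where
  "graph V E \<longleftrightarrow> finite V \<and> (\<forall>x y. E x y \<longrightarrow> x \<in> V \<and> y \<in> V)
     \<and> (\<forall>x y. E x y \<longrightarrow> E y x) \<and> (\<forall>x. \<not> E x x)"

definition restr :: "('a \<Rightarrow> 'a \<Rightarrow> bool) \<Rightarrow> 'a set \<Rightarrow> 'a \<Rightarrow> 'a \<Rightarrow> bool" where
  "restr E S x y \<longleftrightarrow> x \<in> S \<and> y \<in> S \<and> E x y"

definition comps :: "('a \<Rightarrow> 'a \<Rightarrow> bool) \<Rightarrow> 'a set \<Rightarrow> 'a set set" where
  "comps E S = {{y \<in> S. (restr E S)\<^sup>*\<^sup>* x y} | x. x \<in> S}"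

definition connected_graph :: "'a set \<Rightarrow> ('a \<Rightarrow> 'a \<Rightarrow> bool) \<Rightarrow> bool" where
  "connected_graph V E \<longleftrightarrow> V \<noteq> {} \<and> (\<forall>x\<in>V. \<forall>y\<in>V. (restr E V)\<^sup>*\<^sup>* x y)"

definition nbr :: "'a set \<Rightarrow> ('a \<Rightarrow> 'a \<Rightarrow> bool) \<Rightarrow> 'a \<Rightarrow> 'a set" where
  "nbr U E v = {u \<in> U. E v u}"

definition cnbr :: "'a set \<Rightarrow> ('a \<Rightarrow> 'a \<Rightarrow> bool) \<Rightarrow> 'a \<Rightarrow> 'a set" where
  "cnbr U E v = insert v (nbr U E v)"

definition cnbr_set :: "'a set \<Rightarrow> ('a \<Rightarrow> 'a \<Rightarrow> bool) \<Rightarrow> 'a set \<Rightarrow> 'a set" where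
  "cnbr_set U E D = D \<union> {u \<in> U. \<exists>x\<in>D. E u x}"

definition max_degree :: "'a set \<Rightarrow> ('a \<Rightarrow> 'a \<Rightarrow> bool) \<Rightarrow> nat" where
  "max_degree V E = Max ((\<lambda>v. card (nbr V E v)) ` V)"

definition ball :: "'a set \<Rightarrow> ('a \<Rightarrow> 'a \<Rightarrow> bool) \<Rightarrow> nat \<Rightarrow> 'a \<Rightarrow> 'a set" where
  "ball V E d v = {u \<in> V. \<exists>k\<le>d. (restr E V ^^ k) v u}"

definition d_bounded :: "'a set \<Rightarrow> ('a \<Rightarrow> 'a \<Rightarrow> bool) \<Rightarrow> nat \<Rightarrow> 'a set \<Rightarrow> bool" where
  "d_bounded V E d X \<longleftrightarrow> (\<exists>v\<in>V. X \<subseteq> ball V E d v)"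

definition balanced_sep :: "'a set \<Rightarrow> ('a \<Rightarrow> 'a \<Rightarrow> bool) \<Rightarrow> ('a \<Rightarrow> real) \<Rightarrow> real \<Rightarrow> 'a set \<Rightarrow> bool" where
  "balanced_sep V E w c X \<longleftrightarrow> X \<subseteq> V \<and> (\<forall>D\<in>comps E (V - X). sum w D \<le> c)"

definition clique_number :: "('a \<Rightarrow> 'a \<Rightarrow> bool) \<Rightarrow> 'a set \<Rightarrow> nat" where
  "clique_number E U = Max {card K | K. K \<subseteq> U \<and> (\<forall>x\<in>K. \<forall>y\<in>K. x \<noteq> y \<longrightarrow> E x y)}"

definition chromatic_number :: "('a \<Rightarrow> 'a \<Rightarrow> bool) \<Rightarrow> 'a set \<Rightarrow> nat" where
  "chromatic_number E U = (LEAST k. \<exists>f :: 'a \<Rightarrow> nat. (\<forall>u\<in>U. f u < k)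
      \<and> (\<forall>u\<in>U. \<forall>v\<in>U. E u v \<longrightarrow> f u \<noteq> f v))"

definition perfect :: "'a set \<Rightarrow> ('a \<Rightarrow> 'a \<Rightarrow> bool) \<Rightarrow> bool" where
  "perfect V E \<longleftrightarrow> (\<forall>U\<subseteq>V. chromatic_number E U = clique_number E U)"

definition breaks :: "'a set \<Rightarrow> ('a \<Rightarrow> 'a \<Rightarrow> bool) \<Rightarrow> 'a \<Rightarrow> 'a set \<Rightarrow> bool" where
  "breaks U E x Y \<longleftrightarrow> (\<forall>D\<in>comps E (U - cnbr U E x). \<not> Y \<subseteq> cnbr_set U E D)"

definition induced_paw :: "'a set \<Rightarrow> ('a \<Rightarrow> 'a \<Rightarrow> bool) \<Rightarrow> 'a \<Rightarrow> 'a \<Rightarrow> 'a \<Rightarrow> 'a \<Rightarrow> bool" where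
  "induced_paw U E c a b1 b2 \<longleftrightarrow> c \<in> U \<and> a \<in> U \<and> b1 \<in> U \<and> b2 \<in> U
     \<and> distinct [c, a, b1, b2]
     \<and> E a b1 \<and> E a b2 \<and> E b1 b2 \<and> E a c \<and> \<not> E c b1 \<and> \<not> E c b2"

definition paw_friendly :: "'a set \<Rightarrow> ('a \<Rightarrow> 'a \<Rightarrow> bool) \<Rightarrow> bool" where
  "paw_friendly V E \<longleftrightarrow> perfect V E \<and>
     (\<forall>U\<subseteq>V. \<forall>c a b1 b2. induced_paw U E c a b1 b2 \<longrightarrow>
        breaks U E a {c, b1, b2} \<or> breaks U E b1 {c, b2} \<or> breaks U E b2 {c, b1})"

definition Bv :: "'a set \<Rightarrow> ('a \<Rightarrow> 'a \<Rightarrow> bool) \<Rightarrow> ('a \<Rightarrow> real) \<Rightarrow> 'a \<Rightarrow> 'a set" where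
  "Bv V E w v = (SOME D. D \<in> comps E (V - cnbr V E v)
       \<and> (\<forall>D'\<in>comps E (V - cnbr V E v). sum w D' \<le> sum w D))"

definition Cv :: "'a set \<Rightarrow> ('a \<Rightarrow> 'a \<Rightarrow> bool) \<Rightarrow> ('a \<Rightarrow> real) \<Rightarrow> 'a \<Rightarrow> 'a set" where
  "Cv V E w v = insert v {u \<in> nbr V E v. \<exists>b\<in>Bv V E w v. E u b}"

definition Av :: "'a set \<Rightarrow> ('a \<Rightarrow> 'a \<Rightarrow> bool) \<Rightarrow> ('a \<Rightarrow> real) \<Rightarrow> 'a \<Rightarrow> 'a set" where
  "Av V E w v = V - (Bv V E w v \<union> Cv V E w v)"

definition star_sep :: "'a set \<Rightarrow> ('a \<Rightarrow> 'a \<Rightarrow> bool) \<Rightarrow> ('a \<Rightarrow> real) \<Rightarrow> 'a \<Rightarrow> 'a set \<times> 'a set \<times> 'a set" where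
  "star_sep V E w v = (Av V E w v, Cv V E w v, Bv V E w v)"

definition star_twins :: "'a set \<Rightarrow> ('a \<Rightarrow> 'a \<Rightarrow> bool) \<Rightarrow> ('a \<Rightarrow> real) \<Rightarrow> 'a \<Rightarrow> 'a \<Rightarrow> bool" where
  "star_twins V E w u v \<longleftrightarrow> Bv V E w u = Bv V E w v
     \<and> Cv V E w u - {u} = Cv V E w v - {v}
     \<and> Av V E w u - {v} = Av V E w v - {u}"

definition le_A :: "'a set \<Rightarrow> ('a \<Rightarrow> 'a \<Rightarrow> bool) \<Rightarrow> ('a \<Rightarrow> real) \<Rightarrow> ('a \<Rightarrow> nat) \<Rightarrow> 'a \<Rightarrow> 'a \<Rightarrow> bool" where
  "le_A V E w Ord x y \<longleftrightarrow> x = y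
     \<or> (star_twins V E w x y \<and> Ord x < Ord y)
     \<or> (\<not> star_twins V E w x y \<and> y \<in> Av V E w x)"

definition minimal_A :: "'a set \<Rightarrow> ('a \<Rightarrow> 'a \<Rightarrow> bool) \<Rightarrow> ('a \<Rightarrow> real) \<Rightarrow> ('a \<Rightarrow> nat) \<Rightarrow> 'a set" where
  "minimal_A V E w Ord = {x \<in> V. \<forall>y\<in>V. le_A V E w Ord y x \<longrightarrow> y = x}"

definition star_free_bag :: "'a set \<Rightarrow> ('a \<Rightarrow> 'a \<Rightarrow> bool) \<Rightarrow> ('a \<Rightarrow> real) \<Rightarrow> 'a set \<Rightarrow> 'a set" where
  "star_free_bag V E w X = V \<inter> (\<Inter>x\<in>X. Bv V E w x \<union> Cv V E w x)"

definition bipartition :: "('a \<Rightarrow> 'a \<Rightarrow> bool) \<Rightarrow> 'a set \<Rightarrow> 'a set \<Rightarrow> 'a set \<Rightarrow> bool" where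
  "bipartition E U X1 X2 \<longleftrightarrow> X1 \<union> X2 = U \<and> X1 \<inter> X2 = {}
     \<and> (\<forall>x\<in>X1. \<forall>y\<in>X1. \<not> E x y) \<and> (\<forall>x\<in>X2. \<forall>y\<in>X2. \<not> E x y)"

definition bipartite :: "('a \<Rightarrow> 'a \<Rightarrow> bool) \<Rightarrow> 'a set \<Rightarrow> bool" where
  "bipartite E U \<longleftrightarrow> (\<exists>X1 X2. bipartition E U X1 X2)"

definition loosely_non_crossing :: "'a set \<times> 'a set \<times> 'a set \<Rightarrow> 'a set \<times> 'a set \<times> 'a set \<Rightarrow> bool" where
  "loosely_non_crossing S S' \<longleftrightarrow>
     fst S \<inter> fst (snd S') = {} \<and> fst S' \<inter> fst (snd S) = {}"

definition loosely_laminar :: "('a set \<times> 'a set \<times> 'a set) set \<Rightarrow> bool" where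
  "loosely_laminar \<S> \<longleftrightarrow> (\<forall>S\<in>\<S>. \<forall>S'\<in>\<S>. loosely_non_crossing S S')"

end

(* As c >= 1/2 and no d-bounded set is a balanced separator, G - N[v] has a unique heavy
   component B_v, and y in A_x forces B_x to lie inside B_y.  Descending along <=_A, every vertex
   is minimal or lies in A_x for a minimal x, which gives beta = X; two minimal vertices never lie
   in each other's A-part, so a minimal y non-adjacent to a minimal x lies in B_x, whence A_x and
   C_y are disjoint.
   Since G is perfect, G[X] is bipartite as soon as it has no triangle.  For a maximal clique Q
   of G[X] the heavy component K of G - N[Q] lies in every B_p with p in Q, and a vertex v of N[Q]
   next to K has at most one neighbour and at most one non-neighbour in Q: otherwise v, two
   vertices of Q and either a third vertex of Q or a vertex of K form an induced paw none of whose
   three vertices breaks the required set. *)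

theory Submission
  imports Defs
begin

section \<open>Connected components\<close>

lemma symp_restr: "symp E \<Longrightarrow> symp (restr E S)"
  by (auto simp: symp_def restr_def)

lemma restr_rtranclp_mem: "(restr E S)\<^sup>*\<^sup>* u v \<Longrightarrow> u \<in> S \<Longrightarrow> v \<in> S"
  by (induction rule: rtranclp_induct) (auto simp: restr_def)

lemma rtranclp_exit_step:
  assumes "r\<^sup>*\<^sup>* u v" "P u" "\<not> P v"
  obtains s t where "r\<^sup>*\<^sup>* u s" "r s t" "P s" "\<not> P t"
  using assms by (induction rule: rtranclp_induct) (blast intro: rtranclp.rtrancl_into_rtrancl)+

lemma comps_subset: "D \<in> comps E S \<Longrightarrow> D \<subseteq> S"
  by (auto simp: comps_def)

lemma comps_nonempty: "D \<in> comps E S \<Longrightarrow> D \<noteq> {}"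
  by (auto simp: comps_def)

lemma comps_eq_reachable:
  assumes "symp E" "D \<in> comps E S" "u \<in> D"
  shows "D = {y \<in> S. (restr E S)\<^sup>*\<^sup>* u y}"
proof -
  obtain x where x: "D = {y \<in> S. (restr E S)\<^sup>*\<^sup>* x y}"
    using assms(2) by (auto simp: comps_def)
  have "(restr E S)\<^sup>*\<^sup>* x u" using assms(3) x by auto
  moreover have "(restr E S)\<^sup>*\<^sup>* u x"
    using calculation sympD[OF symp_rtranclp[OF symp_restr[OF assms(1)]]] by blast
  ultimately show ?thesis using x by (auto intro: rtranclp_trans)
qed

lemma comps_reachable_mem:
  "symp E \<Longrightarrow> D \<in> comps E S \<Longrightarrow> u \<in> D \<Longrightarrow> (restr E S)\<^sup>*\<^sup>* u v \<Longrightarrow> v \<in> D"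
  using comps_eq_reachable[of E D S u] comps_subset[of D E S] restr_rtranclp_mem[of E S u v]
  by blast

lemma comps_reachable:
  "symp E \<Longrightarrow> D \<in> comps E S \<Longrightarrow> u \<in> D \<Longrightarrow> v \<in> D \<Longrightarrow> (restr E S)\<^sup>*\<^sup>* u v"
  using comps_eq_reachable[of E D S u] by blast

lemma comps_edge_closed:
  assumes "symp E" "D \<in> comps E S" "b \<in> D" "u \<in> S" "E b u"
  shows "u \<in> D"
proof -
  have "restr E S b u" using assms comps_subset[of D E S] by (auto simp: restr_def)
  then show ?thesis using comps_reachable_mem[OF assms(1-3)] by blast
qed

lemma comps_disjoint:
  "symp E \<Longrightarrow> D1 \<in> comps E S \<Longrightarrow> D2 \<in> comps E S \<Longrightarrow> D1 \<noteq> D2 \<Longrightarrow> D1 \<inter> D2 = {}"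
  using comps_eq_reachable[of E D1 S] comps_eq_reachable[of E D2 S] by blast

lemma comps_refine:
  assumes "symp E" "L \<in> comps E S1" "L \<subseteq> S2"
  obtains D where "D \<in> comps E S2" "L \<subseteq> D"
proof -
  obtain x where "x \<in> L" using comps_nonempty[OF assms(2)] by blast
  have "(restr E S2)\<^sup>*\<^sup>* x y" if "y \<in> L" for y
  proof -
    have "(restr E L)\<^sup>*\<^sup>* x y"
    proof -
      have "(restr E S1)\<^sup>*\<^sup>* x y" using comps_reachable[OF assms(1,2) \<open>x \<in> L\<close> that] .
      then show ?thesis
      proof (induction rule: rtranclp_induct)
        case (step y z)
        have "y \<in> L" using restr_rtranclp_mem[OF step(3)] \<open>x \<in> L\<close> .
        then have "z \<in> L" using comps_edge_closed[OF assms(1,2)] step(2) by (auto simp: restr_def)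
        then have "restr E L y z" using \<open>y \<in> L\<close> step(2) by (auto simp: restr_def)
        then show ?case using step(3) by simp
      qed simp
    qed
    then show ?thesis
      by (rule mono_rtranclp[rule_format, rotated]) (use assms(3) in \<open>auto simp: restr_def\<close>)
  qed
  then have "L \<subseteq> {y \<in> S2. (restr E S2)\<^sup>*\<^sup>* x y}" using assms(3) by auto
  moreover have "{y \<in> S2. (restr E S2)\<^sup>*\<^sup>* x y} \<in> comps E S2"
    using \<open>x \<in> L\<close> assms(3) by (auto simp: comps_def)
  ultimately show thesis using that by blast
qed

lemma connected_graph_comps_boundary_edge:
  assumes "symp E" "connected_graph V E" "D \<in> comps E (V - N)" "x \<in> V \<inter> N"
  obtains s t where "s \<in> D" "t \<in> V \<inter> N" "E s t"
proof -
  obtain y where "y \<in> D" using comps_nonempty[OF assms(3)] by blast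
  then have "y \<in> V" using comps_subset[OF assms(3)] by blast
  then have "(restr E V)\<^sup>*\<^sup>* y x" using assms(2,4) by (auto simp: connected_graph_def)
  moreover have "x \<notin> D" using comps_subset[OF assms(3)] assms(4) by blast
  ultimately obtain s t where "s \<in> D" "restr E V s t" "t \<notin> D"
    using \<open>y \<in> D\<close> rtranclp_exit_step[of "restr E V" y x "\<lambda>z. z \<in> D"] by blast
  moreover have "t \<in> N"
    using comps_edge_closed[OF assms(1,3)] calculation by (auto simp: restr_def)
  ultimately show thesis using that by (auto simp: restr_def)
qed

lemma cnbr_relpowp:
  assumes "x \<in> V" "y \<in> cnbr V E x"
  obtains k where "k \<le> 1" "(restr E V ^^ k) x y"
proof (cases "y = x")
  case True then show thesis using that[of 0] by simp
next
  case False
  then have "restr E V x y" using assms by (auto simp: cnbr_def nbr_def restr_def)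
  then show thesis using that[of 1] by (metis relpowp_1 order_refl)
qed

lemma cnbr_cnbr_subset_ball:
  assumes "2 \<le> d" "a \<in> V" "p \<in> cnbr V E a" "z \<in> cnbr V E p"
  shows "z \<in> ball V E d a"
proof -
  have "p \<in> V" using assms(2,3) by (auto simp: cnbr_def nbr_def)
  obtain k1 k2 where "k1 \<le> 1" "(restr E V ^^ k1) a p" "k2 \<le> 1" "(restr E V ^^ k2) p z"
    using cnbr_relpowp[OF assms(2,3)] cnbr_relpowp[OF \<open>p \<in> V\<close> assms(4)] by metis
  then have "(restr E V ^^ (k1 + k2)) a z" by (auto simp: relpowp_add)
  moreover have "z \<in> V" using assms(4) \<open>p \<in> V\<close> by (auto simp: cnbr_def nbr_def)
  ultimately show ?thesis using \<open>k1 \<le> 1\<close> \<open>k2 \<le> 1\<close> assms(1) by (auto simp: ball_def intro!: exI[of _ "k1 + k2"])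
qed

section \<open>Perfect graphs without triangles\<close>

definition clique :: "('a \<Rightarrow> 'a \<Rightarrow> bool) \<Rightarrow> 'a set \<Rightarrow> bool" where
  "clique E K \<longleftrightarrow> (\<forall>x\<in>K. \<forall>y\<in>K. x \<noteq> y \<longrightarrow> E x y)"

lemma cliqueD: "clique E K \<Longrightarrow> x \<in> K \<Longrightarrow> y \<in> K \<Longrightarrow> x \<noteq> y \<Longrightarrow> E x y"
  by (simp add: clique_def)

lemma clique_number_le:
  assumes "\<And>K. K \<subseteq> U \<Longrightarrow> clique E K \<Longrightarrow> card K \<le> k"
  shows "clique_number E U \<le> k"
proof -
  let ?sizes = "{card K | K. K \<subseteq> U \<and> (\<forall>x\<in>K. \<forall>y\<in>K. x \<noteq> y \<longrightarrow> E x y)}"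
  have "?sizes \<subseteq> {..k}" using assms by (auto simp: clique_def)
  moreover have "0 \<in> ?sizes" by force
  ultimately show ?thesis
    unfolding clique_number_def by (subst Max_le_iff) (auto intro: finite_subset)
qed

lemma chromatic_number_colouring:
  assumes "finite U" "\<forall>u\<in>U. \<not> E u u"
  obtains f :: "'a \<Rightarrow> nat"
  where "\<forall>u\<in>U. f u < chromatic_number E U" "\<forall>u\<in>U. \<forall>v\<in>U. E u v \<longrightarrow> f u \<noteq> f v"
proof -
  obtain h where h: "bij_betw h U {0..<card U}" using ex_bij_betw_finite_nat[OF assms(1)] ..
  then have "(\<forall>u\<in>U. h u < card U) \<and> (\<forall>u\<in>U. \<forall>v\<in>U. E u v \<longrightarrow> h u \<noteq> h v)"
    using assms(2) by (fastforce simp: bij_betw_def inj_on_def)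
  then have "\<exists>k (f :: 'a \<Rightarrow> nat). (\<forall>u\<in>U. f u < k) \<and> (\<forall>u\<in>U. \<forall>v\<in>U. E u v \<longrightarrow> f u \<noteq> f v)"
    by blast
  then have "\<exists>f :: 'a \<Rightarrow> nat. (\<forall>u\<in>U. f u < chromatic_number E U)
      \<and> (\<forall>u\<in>U. \<forall>v\<in>U. E u v \<longrightarrow> f u \<noteq> f v)"
    unfolding chromatic_number_def by (rule LeastI_ex)
  then show thesis using that by blast
qed

lemma perfect_triangle_free_bipartite:
  assumes "perfect V E" "U \<subseteq> V" "finite U" "\<forall>u\<in>U. \<not> E u u"
    and "\<And>K. K \<subseteq> U \<Longrightarrow> clique E K \<Longrightarrow> card K \<le> 2"
  shows "bipartite E U"
proof -
  have "chromatic_number E U \<le> 2"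
    using assms(1,2,5) clique_number_le[of U E 2] by (simp add: perfect_def)
  then obtain f :: "'a \<Rightarrow> nat" where f: "\<forall>u\<in>U. f u < 2" "\<forall>u\<in>U. \<forall>v\<in>U. E u v \<longrightarrow> f u \<noteq> f v"
    using chromatic_number_colouring[of U E, OF assms(3,4)] by (metis order_less_le_trans)
  have "\<forall>u\<in>U. f u = 0 \<or> f u = 1" using f(1) by auto
  then have "bipartition E U {u \<in> U. f u = 0} {u \<in> U. f u = 1}"
    using f(2) unfolding bipartition_def by fastforce
  then show ?thesis unfolding bipartite_def by blast
qed

section \<open>Heavy components and canonical star separations\<close>

locale no_bounded_balanced_separator =
  fixes V :: "'a set" and E :: "'a \<Rightarrow> 'a \<Rightarrow> bool" and w :: "'a \<Rightarrow> real"
    and c :: real and d :: nat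
  assumes graph: "graph V E"
    and weight_nonneg: "\<forall>v\<in>V. 0 \<le> w v" and weight_sum: "sum w V = 1"
    and half_le_c: "1/2 \<le> c" and two_le_d: "2 \<le> d"
    and no_separator: "\<not> (\<exists>X. d_bounded V E d X \<and> balanced_sep V E w c X)"
begin

abbreviation N :: "'a \<Rightarrow> 'a set" where "N \<equiv> cnbr V E"
abbreviation A :: "'a \<Rightarrow> 'a set" where "A \<equiv> Av V E w"
abbreviation B :: "'a \<Rightarrow> 'a set" where "B \<equiv> Bv V E w"
abbreviation C :: "'a \<Rightarrow> 'a set" where "C \<equiv> Cv V E w"

lemma symp_E: "symp E"
  using graph by (auto simp: graph_def intro: sympI)

lemma sym_E: "E x y \<Longrightarrow> E y x"
  using graph by (simp add: graph_def)

lemma E_commute: "E x y \<longleftrightarrow> E y x"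
  using sym_E by blast

lemma finite_V: "finite V"
  using graph by (simp add: graph_def)

lemma irrefl_E: "\<not> E x x"
  using graph by (simp add: graph_def)

lemma cnbr_subset: "v \<in> V \<Longrightarrow> N v \<subseteq> V"
  by (auto simp: cnbr_def nbr_def)

lemma heavy_component_exists:
  assumes "Y \<subseteq> V" "v \<in> V" "Y \<subseteq> ball V E d v"
  obtains D where "D \<in> comps E (V - Y)" "c < sum w D"
proof -
  have "d_bounded V E d Y" using assms(2,3) by (auto simp: d_bounded_def)
  then have "\<not> balanced_sep V E w c Y" using no_separator by blast
  then show thesis using assms(1) that by (auto simp: balanced_sep_def not_le)
qed

lemma comps_weight_add_le_1:
  assumes "S \<subseteq> V" "D1 \<in> comps E S" "D2 \<in> comps E S" "D1 \<noteq> D2"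
  shows "sum w D1 + sum w D2 \<le> 1"
proof -
  have "D1 \<union> D2 \<subseteq> V" using assms(1-3) comps_subset by blast
  then have "finite D1" "finite D2" using finite_V finite_subset by auto
  then have "sum w D1 + sum w D2 = sum w (D1 \<union> D2)"
    using comps_disjoint[OF symp_E assms(2-4)] by (simp add: sum.union_disjoint)
  also have "\<dots> \<le> sum w V"
    using \<open>D1 \<union> D2 \<subseteq> V\<close> finite_V weight_nonneg by (intro sum_mono2) auto
  finally show ?thesis using weight_sum by simp
qed

lemma heavy_component_unique:
  "S \<subseteq> V \<Longrightarrow> D1 \<in> comps E S \<Longrightarrow> D2 \<in> comps E S \<Longrightarrow> c < sum w D1 \<Longrightarrow> c < sum w D2 \<Longrightarrow> D1 = D2"
  using comps_weight_add_le_1[of S D1 D2] half_le_c by fastforce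

lemma heavy_component_subset:
  assumes "S2 \<subseteq> V" "L \<in> comps E S1" "L \<subseteq> S2" "c < sum w L"
    and "D \<in> comps E S2" "c < sum w D"
  shows "L \<subseteq> D"
proof -
  obtain D' where D': "D' \<in> comps E S2" "L \<subseteq> D'"
    using comps_refine[OF symp_E assms(2,3)] .
  have "D' \<subseteq> V" using comps_subset[OF D'(1)] assms(1) by blast
  then have "sum w L \<le> sum w D'"
    using D'(2) finite_V weight_nonneg by (intro sum_mono2) (auto intro: finite_subset)
  then have "D' = D" using heavy_component_unique[OF assms(1) D'(1) assms(5)] assms(4,6) by linarith
  then show ?thesis using D'(2) by simp
qed

text \<open>As \<open>c \<ge> 1/2\<close>, the heavy component of \<open>G - N[v]\<close> outweighs every other component, so it is
  the one chosen by the \<open>SOME\<close> in \<open>Bv\<close>.\<close>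

lemma Bv_heavy:
  assumes "v \<in> V"
  shows "B v \<in> comps E (V - N v)" "c < sum w (B v)"
proof -
  let ?comps = "comps E (V - N v)"
  have "v \<in> N v" by (simp add: cnbr_def)
  then have "N v \<subseteq> ball V E d v" using cnbr_cnbr_subset_ball[OF two_le_d assms] by blast
  then obtain D where D: "D \<in> ?comps" "c < sum w D"
    using heavy_component_exists[OF cnbr_subset[OF assms] assms] by blast
  have "sum w D' \<le> sum w D" if "D' \<in> ?comps" for D'
  proof (cases "D' = D")
    case False
    then have "sum w D' + sum w D \<le> 1" using comps_weight_add_le_1 that D(1) by blast
    then show ?thesis using D(2) half_le_c by linarith
  qed simp
  then have "\<exists>D. D \<in> ?comps \<and> (\<forall>D'\<in>?comps. sum w D' \<le> sum w D)" using D(1) by blast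
  then have B: "B v \<in> ?comps \<and> (\<forall>D'\<in>?comps. sum w D' \<le> sum w (B v))"
    unfolding Bv_def by (rule someI_ex)
  then show "B v \<in> ?comps" by blast
  show "c < sum w (B v)" using B D by fastforce
qed

lemma Bv_avoids_cnbr: "v \<in> V \<Longrightarrow> b \<in> B v \<Longrightarrow> b \<in> V \<and> b \<noteq> v \<and> \<not> E v b"
  using comps_subset[OF Bv_heavy(1)] by (fastforce simp: cnbr_def nbr_def)

lemma Bv_edge_closed:
  "v \<in> V \<Longrightarrow> b \<in> B v \<Longrightarrow> u \<in> V \<Longrightarrow> E b u \<Longrightarrow> u \<noteq> v \<Longrightarrow> \<not> E v u \<Longrightarrow> u \<in> B v"
  using comps_edge_closed[OF symp_E Bv_heavy(1), of v b u] by (auto simp: cnbr_def nbr_def)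

lemma heavy_component_subset_Bv:
  "y \<in> V \<Longrightarrow> L \<in> comps E S \<Longrightarrow> L \<subseteq> V - N y \<Longrightarrow> c < sum w L \<Longrightarrow> L \<subseteq> B y"
  using heavy_component_subset[OF _ _ _ _ Bv_heavy] by blast

lemma Cv_eq:
  assumes "v \<in> V"
  shows "C v = insert v {u \<in> V - B v. \<exists>b\<in>B v. E u b}"
proof -
  have "u \<in> V - B v" if "u \<in> nbr V E v" for u
    using that Bv_avoids_cnbr[OF assms, of u] by (auto simp: nbr_def)
  moreover have "u \<in> nbr V E v" if "u \<in> V - B v" "b \<in> B v" "E u b" for u b
  proof -
    have "u \<noteq> v" using Bv_avoids_cnbr[OF assms that(2)] that(3) by blast
    then have "E v u" using Bv_edge_closed[OF assms that(2)] that(1) sym_E[OF that(3)] by blast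
    then show ?thesis using that(1) by (simp add: nbr_def)
  qed
  ultimately show ?thesis unfolding Cv_def by blast
qed

lemma Av_no_edge_to_Bv:
  assumes "v \<in> V" "y \<in> A v"
  shows "y \<in> V" "y \<noteq> v" "y \<notin> B v" "b \<in> B v \<Longrightarrow> \<not> E y b"
  using assms(2) Cv_eq[OF assms(1)] by (auto simp: Av_def)

lemma Bv_mono_Av:
  assumes "x \<in> V" "y \<in> A x"
  shows "B x \<subseteq> B y"
proof -
  have "B x \<subseteq> V - N y"
    using Av_no_edge_to_Bv[OF assms] Bv_avoids_cnbr[OF assms(1)] unfolding cnbr_def nbr_def by blast
  then show ?thesis
    using heavy_component_subset_Bv[OF Av_no_edge_to_Bv(1)[OF assms] Bv_heavy(1)[OF assms(1)] _
        Bv_heavy(2)[OF assms(1)]] by blast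
qed

lemma Av_trans:
  assumes "x \<in> V" "y \<in> A x" "v \<in> A y" "v \<noteq> x"
  shows "v \<in> A x"
proof -
  have "y \<in> V" by (rule Av_no_edge_to_Bv(1)[OF assms(1,2)])
  then have "v \<in> V" "v \<notin> B y" "\<forall>b\<in>B y. \<not> E v b"
    using Av_no_edge_to_Bv[OF _ assms(3)] by blast+
  moreover have "B x \<subseteq> B y" by (rule Bv_mono_Av[OF assms(1,2)])
  ultimately show ?thesis using Cv_eq[OF assms(1)] assms(4) unfolding Av_def by blast
qed

lemma star_twins_iff_Bv_eq:
  assumes "x \<in> V" "y \<in> V"
  shows "star_twins V E w x y \<longleftrightarrow> B x = B y"
proof
  assume eq: "B x = B y"
  define M where "M = {u \<in> V - B x. \<exists>b\<in>B x. E u b}"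
  have "x \<notin> M" "y \<notin> M" using Bv_avoids_cnbr assms eq by (auto simp: M_def)
  moreover have "C x = insert x M" "C y = insert y M"
    using Cv_eq[OF assms(1)] Cv_eq[OF assms(2)] eq by (simp_all add: M_def)
  ultimately have "C x - {x} = C y - {y}" "A x - {y} = A y - {x}"
    unfolding Av_def using eq by blast+
  then show "star_twins V E w x y" using eq by (simp add: star_twins_def)
qed (simp add: star_twins_def)

lemma cnbr_set_clique_subset_ball:
  assumes "clique E Q" "Q \<subseteq> V" "a \<in> Q"
  shows "cnbr_set V E Q \<subseteq> ball V E d a"
proof
  fix z assume "z \<in> cnbr_set V E Q"
  then obtain p where "p \<in> Q" "z \<in> N p" by (auto simp: cnbr_set_def cnbr_def nbr_def E_commute)
  moreover have "p \<in> N a" using \<open>p \<in> Q\<close> assms by (auto simp: clique_def cnbr_def nbr_def)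
  moreover have "a \<in> V" using assms(2,3) by blast
  ultimately show "z \<in> ball V E d a" by (metis cnbr_cnbr_subset_ball[OF two_le_d])
qed

lemma not_breaks_if_covered_by_Bv:
  assumes "x \<in> V" "Y \<subseteq> cnbr_set V E (B x)"
  shows "\<not> breaks V E x Y"
  using Bv_heavy(1)[OF assms(1)] assms(2) unfolding breaks_def by blast

end

section \<open>Minimal elements of \<open>\<le>\<^sub>A\<close>\<close>

locale star_order = no_bounded_balanced_separator +
  fixes Ord :: "'a \<Rightarrow> nat"
  assumes inj_Ord: "inj_on Ord V"
begin

abbreviation X :: "'a set" where "X \<equiv> minimal_A V E w Ord"

lemma minimal_A_subset: "X \<subseteq> V"
  by (auto simp: minimal_A_def)

lemma le_A_strict:
  assumes "x \<in> V" "y \<in> V" "le_A V E w Ord x y" "x \<noteq> y"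
  shows "y \<in> A x" "B x \<subseteq> B y" "B x = B y \<Longrightarrow> Ord x < Ord y"
proof -
  have "y \<in> A x" if "B x = B y"
  proof -
    have "y \<notin> B y" "\<forall>b\<in>B y. \<not> E y b" using Bv_avoids_cnbr[OF assms(2)] by auto
    then show ?thesis using that Cv_eq[OF assms(1)] assms(2,4) by (simp add: Av_def)
  qed
  moreover have "star_twins V E w x y \<or> y \<in> A x"
    using assms(3,4) by (auto simp: le_A_def)
  ultimately show "y \<in> A x" using star_twins_iff_Bv_eq[OF assms(1,2)] by blast
  then show "B x \<subseteq> B y" by (rule Bv_mono_Av[OF assms(1)])
  show "B x = B y \<Longrightarrow> Ord x < Ord y"
    using assms(3,4) star_twins_iff_Bv_eq[OF assms(1,2)] by (simp add: le_A_def)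
qed

lemma minimal_A_or_in_Av:
  assumes "v \<in> V"
  shows "v \<in> X \<or> (\<exists>x\<in>X. v \<in> A x)"
  using wf_measures[of "[\<lambda>v. card (B v), Ord]"] assms
proof (induction v rule: wf_induct_rule)
  case (less v)
  show ?case
  proof (cases "v \<in> X")
    case False
    then obtain y where y: "y \<in> V" "le_A V E w Ord y v" "y \<noteq> v"
      using less.prems unfolding minimal_A_def by blast
    note y_below_v = le_A_strict[OF y(1) less.prems y(2,3)]
    have "finite (B v)"
      using Bv_avoids_cnbr[OF less.prems] finite_V by (meson finite_subset subsetI)
    then have "(y, v) \<in> measures [\<lambda>v. card (B v), Ord]"
      using y_below_v(2,3) by (cases "B y = B v") (auto intro: psubset_card_mono)
    then have "y \<in> X \<or> (\<exists>x\<in>X. y \<in> A x)" using less.IH y(1) by blast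
    then show ?thesis
    proof
      assume "\<exists>x\<in>X. y \<in> A x"
      then obtain x where "x \<in> X" "y \<in> A x" by blast
      moreover have "v \<noteq> x" using False \<open>x \<in> X\<close> by blast
      ultimately show ?thesis using Av_trans[OF _ _ y_below_v(1)] minimal_A_subset by blast
    qed (use y_below_v(1) in blast)
  qed simp
qed

lemma minimal_A_in_Bv_Cv:
  assumes "x \<in> X" "y \<in> X"
  shows "x \<in> B y \<union> C y"
proof (rule ccontr)
  assume "x \<notin> B y \<union> C y"
  moreover have "x \<in> V" "y \<in> V" using assms minimal_A_subset by auto
  ultimately have "x \<in> A y" "x \<noteq> y" by (auto simp: Av_def Cv_def)
  have "le_A V E w Ord y x \<or> le_A V E w Ord x y"
  proof (cases "star_twins V E w y x")
    case True
    have "Ord x \<noteq> Ord y" using inj_Ord \<open>x \<in> V\<close> \<open>y \<in> V\<close> \<open>x \<noteq> y\<close> by (auto dest: inj_onD)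
    moreover have "star_twins V E w x y"
      using True star_twins_iff_Bv_eq \<open>x \<in> V\<close> \<open>y \<in> V\<close> by metis
    ultimately show ?thesis using True by (auto simp: le_A_def)
  qed (use \<open>x \<in> A y\<close> in \<open>simp add: le_A_def\<close>)
  then show False
    using assms \<open>x \<in> V\<close> \<open>y \<in> V\<close> \<open>x \<noteq> y\<close> unfolding minimal_A_def by blast
qed

lemma star_free_bag_eq_minimal_A: "star_free_bag V E w X = X"
proof
  show "star_free_bag V E w X \<subseteq> X"
  proof
    fix v assume "v \<in> star_free_bag V E w X"
    then have "v \<in> V" "\<forall>x\<in>X. v \<in> B x \<union> C x" by (auto simp: star_free_bag_def)
    then show "v \<in> X" using minimal_A_or_in_Av by (auto simp: Av_def)
  qed
  show "X \<subseteq> star_free_bag V E w X"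
    using minimal_A_in_Bv_Cv minimal_A_subset by (auto simp: star_free_bag_def)
qed

lemma Av_Cv_disjoint:
  assumes "x \<in> X" "y \<in> X" "\<not> E x y"
  shows "A x \<inter> C y = {}"
proof (cases "x = y")
  case False
  have "x \<in> V" using assms(1) minimal_A_subset by blast
  have "y \<in> B x"
    using minimal_A_in_Bv_Cv[OF assms(2,1)] False assms(3) by (auto simp: Cv_def nbr_def)
  show ?thesis
  proof (rule equals0I)
    fix u assume u: "u \<in> A x \<inter> C y"
    then have "u = y \<or> E y u" by (auto simp: Cv_def nbr_def)
    then show False
      using Av_no_edge_to_Bv[OF \<open>x \<in> V\<close>] u \<open>y \<in> B x\<close> sym_E by blast
  qed
qed (auto simp: Av_def)

lemma loosely_laminar_independent:
  assumes "Y \<subseteq> X" "\<forall>x\<in>Y. \<forall>y\<in>Y. \<not> E x y"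
  shows "loosely_laminar (star_sep V E w ` Y)"
proof -
  have "loosely_non_crossing (star_sep V E w x) (star_sep V E w y)" if "x \<in> Y" "y \<in> Y" for x y
    using Av_Cv_disjoint[of x y] Av_Cv_disjoint[of y x] assms that
    unfolding loosely_non_crossing_def star_sep_def by (simp add: subset_iff)
  then show ?thesis unfolding loosely_laminar_def by blast
qed

lemma loosely_laminar_bipartition:
  assumes "bipartition E X X1 X2"
  shows "loosely_laminar (star_sep V E w ` X1) \<and> loosely_laminar (star_sep V E w ` X2)"
proof -
  have "X1 \<subseteq> X" "X2 \<subseteq> X" "\<forall>x\<in>X1. \<forall>y\<in>X1. \<not> E x y" "\<forall>x\<in>X2. \<forall>y\<in>X2. \<not> E x y"
    using assms unfolding bipartition_def by blast+
  then show ?thesis using loosely_laminar_independent by blast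
qed

lemma minimal_A_edge_Cv:
  assumes "p \<in> X" "q \<in> X" "E p q"
  obtains b where "b \<in> B p" "E q b"
proof -
  have "p \<in> V" using assms(1) minimal_A_subset by blast
  have "q \<notin> B p" using Bv_avoids_cnbr[OF \<open>p \<in> V\<close>] assms(3) by blast
  moreover have "q \<noteq> p" using assms(3) irrefl_E by blast
  ultimately show thesis
    using minimal_A_in_Bv_Cv[OF assms(2,1)] that by (auto simp: Cv_def)
qed

lemma minimal_A_dominates:
  assumes "v \<in> V"
  obtains u where "u \<in> X" "B u \<subseteq> B v" "\<forall>b\<in>B u. \<not> E v b" "\<forall>p\<in>X. E v p \<longrightarrow> p = u \<or> E u p"
proof (cases "v \<in> X")
  case True
  then show thesis using that[of v] Bv_avoids_cnbr[OF assms] by blast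
next
  case False
  then obtain u where u: "u \<in> X" "v \<in> A u" using minimal_A_or_in_Av[OF assms] by blast
  then have "u \<in> V" using minimal_A_subset by blast
  have "p = u \<or> E u p" if "p \<in> X" "E v p" for p
  proof -
    have "p \<notin> B u" using Av_no_edge_to_Bv(4)[OF \<open>u \<in> V\<close> u(2)] that(2) by blast
    then show ?thesis using minimal_A_in_Bv_Cv[OF that(1) u(1)] by (auto simp: Cv_def nbr_def)
  qed
  then show thesis
    using that[OF u(1) Bv_mono_Av[OF \<open>u \<in> V\<close> u(2)]] Av_no_edge_to_Bv(4)[OF \<open>u \<in> V\<close> u(2)] by blast
qed

end

section \<open>Triangles among the minimal elements\<close>

locale paw_friendly_star_order = star_order +
  assumes connected: "connected_graph V E" and paw_friendly: "paw_friendly V E"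
begin

lemma paw_not_covered_by_Bv:
  assumes "induced_paw V E z a b1 b2"
    and "{z, b1, b2} \<subseteq> cnbr_set V E (B a)" "{z, b2} \<subseteq> cnbr_set V E (B b1)"
    and "{z, b1} \<subseteq> cnbr_set V E (B b2)"
  shows False
proof -
  have "a \<in> V" "b1 \<in> V" "b2 \<in> V" using assms(1) by (auto simp: induced_paw_def)
  then have "\<not> breaks V E a {z, b1, b2}" "\<not> breaks V E b1 {z, b2}" "\<not> breaks V E b2 {z, b1}"
    using assms(2-4) not_breaks_if_covered_by_Bv by simp_all
  moreover have "breaks V E a {z, b1, b2} \<or> breaks V E b1 {z, b2} \<or> breaks V E b2 {z, b1}"
    using paw_friendly assms(1) unfolding paw_friendly_def by blast
  ultimately show False by blast
qed

end

locale clique_attachment = paw_friendly_star_order +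
  fixes Q K s v
  assumes clique_Q: "clique E Q" and Q_subset: "Q \<subseteq> X"
    and Q_maximal: "\<And>u. u \<in> X - Q \<Longrightarrow> \<exists>p\<in>Q. \<not> E u p"
    and K_comp: "K \<in> comps E (V - cnbr_set V E Q)" and K_heavy: "c < sum w K"
    and s_in_K: "s \<in> K" and v_in_NQ: "v \<in> cnbr_set V E Q" and edge_v_s: "E v s"
begin

lemma Q_subset_V: "Q \<subseteq> V"
  using Q_subset minimal_A_subset by blast

lemma K_outside_NQ: "k \<in> K \<Longrightarrow> k \<in> V \<and> k \<notin> Q \<and> (\<forall>p\<in>Q. \<not> E k p)"
  using comps_subset[OF K_comp] by (auto simp: cnbr_set_def)

lemma K_subset_Bv:
  assumes "p \<in> Q"
  shows "K \<subseteq> B p"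
proof -
  have "K \<subseteq> V - N p"
    using K_outside_NQ assms sym_E unfolding cnbr_def nbr_def by blast
  then show ?thesis
    using heavy_component_subset_Bv[OF _ K_comp _ K_heavy] Q_subset_V assms by blast
qed

lemma v_notin_Q: "v \<notin> Q"
  using K_subset_Bv s_in_K edge_v_s Bv_avoids_cnbr Q_subset_V by blast

lemma v_in_V: "v \<in> V"
  using v_in_NQ Q_subset_V by (auto simp: cnbr_set_def)

lemma v_has_neighbour_in_Q:
  obtains a where "a \<in> Q" "E v a"
  using v_in_NQ v_notin_Q that by (auto simp: cnbr_set_def)

lemma clique_vertex_in_cnbr_set_Bv:
  assumes "x \<in> Q" "y \<in> Q" "x \<noteq> y"
  shows "y \<in> cnbr_set V E (B x)"
proof -
  have "E x y" by (rule cliqueD[OF clique_Q assms])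
  then obtain b where "b \<in> B x" "E y b" using minimal_A_edge_Cv Q_subset assms(1,2) by blast
  then show ?thesis using assms(2) Q_subset_V by (auto simp: cnbr_set_def)
qed

lemma v_in_cnbr_set_Bv: "p \<in> Q \<Longrightarrow> v \<in> cnbr_set V E (B p)"
  using K_subset_Bv s_in_K edge_v_s v_in_V by (auto simp: cnbr_set_def)

lemma K_subset_cnbr_set_Bv: "p \<in> Q \<Longrightarrow> k \<in> K \<Longrightarrow> k \<in> cnbr_set V E (B p)"
  using K_subset_Bv by (auto simp: cnbr_set_def)

lemma nonneighbour_unique:
  assumes "p \<in> Q" "q \<in> Q" "\<not> E p v" "\<not> E q v"
  shows "p = q"
proof (rule ccontr)
  assume "p \<noteq> q"
  obtain a where a: "a \<in> Q" "E v a" by (rule v_has_neighbour_in_Q)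
  have "a \<noteq> p" "a \<noteq> q" using a(2) assms(3,4) sym_E by blast+
  then have "E a p" "E a q" "E p q"
    using cliqueD[OF clique_Q] a(1) assms(1,2) \<open>p \<noteq> q\<close> by simp_all
  moreover have "a \<in> V" "p \<in> V" "q \<in> V" "v \<notin> Q"
    using a(1) assms(1,2) Q_subset_V v_notin_Q by blast+
  ultimately have paw: "induced_paw V E v a p q"
    using a assms(1-4) \<open>p \<noteq> q\<close> \<open>a \<noteq> p\<close> \<open>a \<noteq> q\<close> v_in_V
    unfolding induced_paw_def by (auto simp: E_commute)
  show False
    by (rule paw_not_covered_by_Bv[OF paw])
      (use a(1) assms(1,2) \<open>p \<noteq> q\<close> not_sym[OF \<open>p \<noteq> q\<close>] \<open>a \<noteq> p\<close> \<open>a \<noteq> q\<close> in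
        \<open>simp_all add: v_in_cnbr_set_Bv clique_vertex_in_cnbr_set_Bv\<close>)
qed

lemma dominator_outside_Q:
  obtains u where "u \<in> X - Q" "B u \<subseteq> B v" "\<forall>p\<in>Q. E v p \<longrightarrow> E u p"
proof -
  obtain u where u: "u \<in> X" "B u \<subseteq> B v" "\<forall>b\<in>B u. \<not> E v b" "\<forall>p\<in>X. E v p \<longrightarrow> p = u \<or> E u p"
    by (rule minimal_A_dominates[OF v_in_V])
  have "u \<notin> Q" using u(3) K_subset_Bv s_in_K edge_v_s by blast
  then show thesis using that u Q_subset by blast
qed

lemma has_nonneighbour: "\<exists>q\<in>Q. \<not> E q v"
proof (rule ccontr)
  assume "\<not> (\<exists>q\<in>Q. \<not> E q v)"
  moreover obtain u where "u \<in> X - Q" "\<forall>p\<in>Q. E v p \<longrightarrow> E u p" by (rule dominator_outside_Q)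
  ultimately show False using Q_maximal sym_E by blast
qed

lemma nonneighbour_in_Bv:
  assumes "q \<in> Q" "\<not> E q v"
  shows "q \<in> B v"
proof -
  obtain u where u: "u \<in> X - Q" "B u \<subseteq> B v" "\<forall>p\<in>Q. E v p \<longrightarrow> E u p"
    by (rule dominator_outside_Q)
  have "E u p" if "p \<in> Q" "p \<noteq> q" for p
    using u(3) nonneighbour_unique[OF that(1) assms(1)] assms(2) that sym_E by blast
  then have "\<not> E u q" using Q_maximal[OF u(1)] by blast
  moreover have "q \<noteq> u" using u(1) assms(1) by blast
  ultimately have "q \<in> B u"
    using minimal_A_in_Bv_Cv[of q u] assms(1) Q_subset u(1) by (auto simp: Cv_def nbr_def)
  then show ?thesis using u(2) by blast
qed

text \<open>The heavy component of \<open>G - (N[Q] \<union> N[v])\<close> lies in \<open>K\<close> as well as in \<open>B\<^sub>v\<close>.\<close>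

lemma K_meets_Bv:
  obtains l where "l \<in> K" "l \<in> B v"
proof -
  obtain a where a: "a \<in> Q" "E v a" by (rule v_has_neighbour_in_Q)
  let ?Y = "cnbr_set V E Q \<union> N v"
  have "N v \<subseteq> ball V E d a"
    using cnbr_cnbr_subset_ball[OF two_le_d, where a=a and p=v] a Q_subset_V v_in_V
    by (auto simp: cnbr_def nbr_def E_commute)
  then have "?Y \<subseteq> ball V E d a"
    using cnbr_set_clique_subset_ball[OF clique_Q Q_subset_V a(1)] by blast
  moreover have "?Y \<subseteq> V" using cnbr_subset[OF v_in_V] by (auto simp: cnbr_set_def Q_subset_V)
  ultimately obtain L where L: "L \<in> comps E (V - ?Y)" "c < sum w L"
    using heavy_component_exists Q_subset_V a(1) by blast
  have "L \<subseteq> K" using heavy_component_subset[OF _ L(1) _ L(2) K_comp K_heavy] comps_subset[OF L(1)]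
    by blast
  moreover have "L \<subseteq> B v" using heavy_component_subset_Bv[OF v_in_V L(1) _ L(2)] comps_subset[OF L(1)]
    by blast
  moreover obtain l where "l \<in> L" using comps_nonempty[OF L(1)] by blast
  ultimately show thesis using that by blast
qed

text \<open>A walk inside \<open>K\<close> from \<open>s \<notin> B\<^sub>v\<close> into \<open>B\<^sub>v\<close> enters \<open>B\<^sub>v\<close> from a neighbour of \<open>v\<close>.\<close>

lemma attachment_reaches_Bv:
  obtains s' t where "s' \<in> K" "E v s'" "t \<in> B v" "E s' t"
proof -
  obtain l where "l \<in> K" "l \<in> B v" by (rule K_meets_Bv)
  then have "(restr E (V - cnbr_set V E Q))\<^sup>*\<^sup>* s l"
    using comps_reachable[OF symp_E K_comp s_in_K] by blast
  moreover have "s \<notin> B v" using Bv_avoids_cnbr[OF v_in_V] edge_v_s by blast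
  ultimately obtain s' t where st: "(restr E (V - cnbr_set V E Q))\<^sup>*\<^sup>* s s'"
      "restr E (V - cnbr_set V E Q) s' t" "s' \<notin> B v" "t \<in> B v"
    using rtranclp_exit_step[of _ s l "\<lambda>x. x \<notin> B v"] \<open>l \<in> B v\<close> by blast
  have "s' \<in> K" using comps_reachable_mem[OF symp_E K_comp s_in_K st(1)] .
  have "E s' t" using st(2) by (simp add: restr_def)
  have "E v s'"
  proof (rule ccontr)
    assume "\<not> E v s'"
    moreover have "s' \<noteq> v" using K_outside_NQ[OF \<open>s' \<in> K\<close>] v_in_NQ
      by (auto simp: cnbr_set_def)
    ultimately have "s' \<in> B v"
      using Bv_edge_closed[OF v_in_V st(4)] sym_E[OF \<open>E s' t\<close>] K_outside_NQ[OF \<open>s' \<in> K\<close>] by blast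
    then show False using st(3) by blast
  qed
  then show thesis using that \<open>s' \<in> K\<close> st(4) \<open>E s' t\<close> by blast
qed

lemma neighbour_unique:
  assumes "a \<in> Q" "b \<in> Q" "E a v" "E b v"
  shows "a = b"
proof (rule ccontr)
  assume "a \<noteq> b"
  obtain q where q: "q \<in> Q" "\<not> E q v" using has_nonneighbour by blast
  have "q \<in> B v" by (rule nonneighbour_in_Bv[OF q])
  have "a \<noteq> q" "b \<noteq> q" using q(2) assms(3,4) by blast+
  then have "E a b" "E a q" "E b q"
    using cliqueD[OF clique_Q] assms(1,2) q(1) \<open>a \<noteq> b\<close> by simp_all
  obtain s' t where s': "s' \<in> K" "E v s'" "t \<in> B v" "E s' t" by (rule attachment_reaches_Bv)
  have "a \<in> V" "b \<in> V" "s' \<in> V" "s' \<notin> Q" "\<not> E s' a" "\<not> E s' b"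
    using assms(1,2) Q_subset_V K_outside_NQ[OF s'(1)] by blast+
  moreover have "v \<notin> Q" by (rule v_notin_Q)
  ultimately have paw: "induced_paw V E s' v a b"
    using assms \<open>a \<noteq> b\<close> \<open>E a b\<close> s'(2) v_in_V unfolding induced_paw_def by (auto simp: E_commute)
  have "{s', a, b} \<subseteq> cnbr_set V E (B v)"
    using s'(3,4) \<open>q \<in> B v\<close> \<open>E a q\<close> \<open>E b q\<close> \<open>a \<in> V\<close> \<open>b \<in> V\<close> \<open>s' \<in> V\<close>
    unfolding cnbr_set_def by blast
  then show False
    by (rule paw_not_covered_by_Bv[OF paw])
      (use assms(1,2) s'(1) \<open>a \<noteq> b\<close> not_sym[OF \<open>a \<noteq> b\<close>] in
        \<open>simp_all add: K_subset_cnbr_set_Bv clique_vertex_in_cnbr_set_Bv\<close>)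
qed

lemma card_Q_le_2: "card Q \<le> 2"
proof -
  have "finite Q" using Q_subset_V finite_V finite_subset by blast
  then have "card {p \<in> Q. \<not> E p v} \<le> Suc 0" "card {p \<in> Q. E p v} \<le> Suc 0"
    using nonneighbour_unique neighbour_unique by (simp_all add: card_le_Suc0_iff_eq)
  moreover have "Q = {p \<in> Q. \<not> E p v} \<union> {p \<in> Q. E p v}" by blast
  then have "card Q \<le> card {p \<in> Q. \<not> E p v} + card {p \<in> Q. E p v}"
    by (metis card_Un_le)
  ultimately show ?thesis by linarith
qed

end

context paw_friendly_star_order
begin

lemma maximal_clique_card_le_2:
  assumes "clique E Q" "Q \<subseteq> X" "Q \<noteq> {}" "\<And>u. u \<in> X - Q \<Longrightarrow> \<exists>p\<in>Q. \<not> E u p"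
  shows "card Q \<le> 2"
proof -
  obtain a where "a \<in> Q" using assms(3) by blast
  have "Q \<subseteq> V" using assms(2) minimal_A_subset by blast
  have "cnbr_set V E Q \<subseteq> V" using \<open>Q \<subseteq> V\<close> by (auto simp: cnbr_set_def)
  then obtain K where K: "K \<in> comps E (V - cnbr_set V E Q)" "c < sum w K"
    using heavy_component_exists cnbr_set_clique_subset_ball[OF assms(1) \<open>Q \<subseteq> V\<close> \<open>a \<in> Q\<close>]
      \<open>Q \<subseteq> V\<close> \<open>a \<in> Q\<close> by blast
  moreover have "a \<in> V \<inter> cnbr_set V E Q" using \<open>a \<in> Q\<close> \<open>Q \<subseteq> V\<close> by (auto simp: cnbr_set_def)
  ultimately obtain s t where "s \<in> K" "t \<in> V \<inter> cnbr_set V E Q" "E s t"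
    using connected_graph_comps_boundary_edge[OF symp_E connected K(1)] by blast
  then have "clique_attachment V E w c d Ord Q K s t"
    using assms K by (intro clique_attachment.intro clique_attachment_axioms.intro
      paw_friendly_star_order_axioms) (auto simp: E_commute)
  then show ?thesis by (rule clique_attachment.card_Q_le_2)
qed

lemma clique_minimal_A_card_le_2:
  assumes "K \<subseteq> X" "clique E K"
  shows "card K \<le> 2"
proof -
  let ?P = "\<lambda>Q. clique E Q \<and> K \<subseteq> Q \<and> Q \<subseteq> X"
  have "finite X" using minimal_A_subset finite_V finite_subset by blast
  then have "\<forall>Q. ?P Q \<longrightarrow> card Q < card X + 1" by (auto dest: card_mono)
  moreover have "?P K" using assms by blast
  ultimately have "\<exists>Q. ?P Q \<and> (\<forall>Q'. ?P Q' \<longrightarrow> card Q' \<le> card Q)"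
    using Lattices_Big.ex_has_greatest_nat[of ?P K card "card X + 1"] by presburger
  then obtain Q where Q: "?P Q" "\<And>Q'. ?P Q' \<Longrightarrow> card Q' \<le> card Q" by blast
  have "finite Q" using Q(1) \<open>finite X\<close> finite_subset by blast
  have "\<exists>p\<in>Q. \<not> E u p" if "u \<in> X - Q" for u
  proof (rule ccontr)
    assume "\<not> (\<exists>p\<in>Q. \<not> E u p)"
    then have "clique E (insert u Q)" using Q(1) sym_E unfolding clique_def by blast
    then have "?P (insert u Q)" using Q(1) that by blast
    then show False using Q(2)[of "insert u Q"] \<open>finite Q\<close> that by simp
  qed
  then have "Q = {} \<or> card Q \<le> 2" using maximal_clique_card_le_2 Q(1) by blast
  then show ?thesis using Q(1) card_mono[OF \<open>finite Q\<close>, of K] by auto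
qed

lemma bipartite_minimal_A: "bipartite E X"
proof -
  have "perfect V E" using paw_friendly by (simp add: paw_friendly_def)
  moreover have "finite X" using minimal_A_subset finite_V by (rule finite_subset)
  ultimately show ?thesis
    using perfect_triangle_free_bipartite minimal_A_subset irrefl_E clique_minimal_A_card_le_2
    by blast
qed

end

theorem lemma6p1:
  fixes V :: "'a set" and E :: "'a \<Rightarrow> 'a \<Rightarrow> bool" and w :: "'a \<Rightarrow> real"
    and c :: real and d \<delta> :: nat and Ord :: "'a \<Rightarrow> nat"
  assumes "1/2 \<le> c" and "c < 1"
    and "d > 0" and "\<delta> > 0" and "d \<ge> \<delta> + 3"
    and "graph V E" and "connected_graph V E" and "paw_friendly V E"
    and "max_degree V E = \<delta>"
    and "\<forall>v\<in>V. 0 \<le> w v \<and> w v \<le> 1" and "sum w V = 1"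
    and "\<not> (\<exists>X. d_bounded V E d X \<and> balanced_sep V E w c X)"
    and "bij_betw Ord V {1..card V}"
  shows "star_free_bag V E w (minimal_A V E w Ord) = minimal_A V E w Ord
       \<and> bipartite E (star_free_bag V E w (minimal_A V E w Ord))
       \<and> (\<forall>X1 X2. bipartition E (star_free_bag V E w (minimal_A V E w Ord)) X1 X2 \<longrightarrow>
       loosely_laminar (star_sep V E w ` X1) \<and> loosely_laminar (star_sep V E w ` X2))"
proof -
  interpret paw_friendly_star_order V E w c d Ord
    using assms by unfold_locales (auto simp: bij_betw_def)
  show ?thesis
    using star_free_bag_eq_minimal_A bipartite_minimal_A loosely_laminar_bipartition by simp
qed

end
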